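(* Let $P$ be a set of $n$ points in general position in the plane. Then there are two points $p_1,p_2\in\mathbb{R}^2$ such that (1) every closed halfplane containing at least one of $p_1,p_2$ contains at least $\frac{n}{5}$ points of $P$, and (2) every closed halfplane containing both $p_1$ and $p_2$ contains at least $\frac{2n}{5}$ points of $P$.
   Context: General position means no three points of $P$ are collinear. *)

theory Defs
  imports "HOL-Analysis.Analysis"
begin

definition closed_halfplane :: "(real^2) set \<Rightarrow> bool" where
  "closed_halfplane H \<longleftrightarrow> (\<exists>a b. a \<noteq> 0 \<and> H = {x. inner a x \<le> b})"

definition general_position :: "(real^2) set \<Rightarrow> bool" where
  "general_position P \<longleftrightarrow>
     (\<forall>p\<in>P. \<forall>q\<in>P. \<forall>r\<in>P. p \<noteq> q \<and> q \<noteq> r \<and> p \<noteq> r \<longrightarrow> \<not> collinear {p, q, r})"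

end

theory Submission
  imports Defs
begin

text \<open>
  A closed halfplane \<open>H\<close> with fewer than \<open>n/5\<close> (resp. \<open>2n/5\<close>) points of \<open>P\<close> leaves more
  than \<open>4n/5\<close> (resp. \<open>3n/5\<close>) points in \<open>P - H\<close>, whose convex hull misses \<open>H\<close>. So it
  suffices to find \<open>p\<^sub>1, p\<^sub>2\<close> in the hull of every subset of \<open>P\<close> with more than \<open>4n/5\<close>
  points such that the segment \<open>[p\<^sub>1, p\<^sub>2]\<close> meets the hull of every subset with more than
  \<open>3n/5\<close> points.

  Any three subsets with more than \<open>4n/5\<close> points together with two subsets with more than
  \<open>3n/5\<close> points share a point of \<open>P\<close>, since their complements have fewer than \<open>n\<close> points
  in total. By Helly's theorem in the plane, the convex sets \<open>K S\<close> obtained by intersecting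
  all the \<open>4n/5\<close>-hulls with the hull of one \<open>3n/5\<close>-subset \<open>S\<close> therefore meet pairwise.
  By Helly's theorem on the line, their projections to the first axis share a point, so some
  vertical line meets every \<open>K S\<close>; the lowest and highest of the chosen points on that line
  are \<open>p\<^sub>1\<close> and \<open>p\<^sub>2\<close>.
\<close>

lemma Helly_indexed:
  fixes K :: "'i \<Rightarrow> 'a::euclidean_space set"
  assumes "finite I" "\<And>i. i \<in> I \<Longrightarrow> convex (K i)"
    and "\<And>J. J \<subseteq> I \<Longrightarrow> J \<noteq> {} \<Longrightarrow> card J \<le> DIM('a) + 1 \<Longrightarrow> \<Inter>(K ` J) \<noteq> {}"
  shows "\<Inter>(K ` I) \<noteq> {}"
proof -
  have small: "\<Inter>t \<noteq> {}" if "t \<subseteq> K ` I" "t \<noteq> {}" "card t \<le> DIM('a) + 1" for t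
  proof -
    obtain J where J: "J \<subseteq> I" "inj_on K J" "t = K ` J"
      using \<open>t \<subseteq> K ` I\<close> by (auto simp: subset_image_inj)
    then have "card J \<le> DIM('a) + 1"
      using that(3) by (simp add: card_image)
    then show ?thesis
      using assms(3) J that(2) by blast
  qed
  show ?thesis
  proof (cases "DIM('a) + 1 \<le> card (K ` I)")
    case True
    show ?thesis
    proof (rule Helly[OF True])
      show "\<forall>s\<in>K ` I. convex s"
        using assms(2) by blast
      fix t assume "t \<subseteq> K ` I" "card t = DIM('a) + 1"
      then show "\<Inter>t \<noteq> {}"
        by (intro small) auto
    qed
  next
    case False
    show ?thesis
    proof (cases "I = {}")
      case True
      then show ?thesis
        by simp
    next
      case False
      with \<open>\<not> DIM('a) + 1 \<le> card (K ` I)\<close> show ?thesis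
        by (intro small) auto
    qed
  qed
qed

lemma Helly_real_pairwise:
  fixes K :: "'i \<Rightarrow> real set"
  assumes "finite I" "\<And>i. i \<in> I \<Longrightarrow> convex (K i)"
    and "\<And>i j. i \<in> I \<Longrightarrow> j \<in> I \<Longrightarrow> K i \<inter> K j \<noteq> {}"
  shows "\<Inter>(K ` I) \<noteq> {}"
proof (rule Helly_indexed[OF assms(1,2)])
  fix J assume J: "J \<subseteq> I" "J \<noteq> {}" "card J \<le> DIM(real) + 1"
  have "finite J"
    using J(1) assms(1) by (rule finite_subset)
  with J have "card J = 1 \<or> card J = 2"
    using card_gt_0_iff[of J] by auto
  then show "\<Inter>(K ` J) \<noteq> {}"
  proof
    assume "card J = 1"
    then obtain i where "J = {i}"
      by (auto simp: card_1_singleton_iff)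
    then show ?thesis
      using assms(3)[of i i] J(1) by auto
  next
    assume "card J = 2"
    then obtain i j where "J = {i, j}"
      by (auto simp: card_2_iff)
    then show ?thesis
      using assms(3)[of i j] J(1) by auto
  qed
qed

lemma segment_transversal_pairwise_intersecting:
  fixes K :: "'i \<Rightarrow> (real^2) set"
  assumes "finite I" "I \<noteq> {}" "\<And>i. i \<in> I \<Longrightarrow> convex (K i)"
    and "\<And>i j. i \<in> I \<Longrightarrow> j \<in> I \<Longrightarrow> K i \<inter> K j \<noteq> {}"
  shows "\<exists>p1 p2. p1 \<in> \<Union>(K ` I) \<and> p2 \<in> \<Union>(K ` I) \<and>
           (\<forall>i\<in>I. closed_segment p1 p2 \<inter> K i \<noteq> {})"
proof -
  have "\<Inter>((\<lambda>i. (\<lambda>x. x$1) ` K i) ` I) \<noteq> {}"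
  proof (rule Helly_real_pairwise[OF assms(1)])
    show "convex ((\<lambda>x. x$1) ` K i)" if "i \<in> I" for i
      using assms(3)[OF that]
      by (intro convex_linear_image bounded_linear.linear[OF bounded_linear_vec_nth])
    show "(\<lambda>x. x$1) ` K i \<inter> (\<lambda>x. x$1) ` K j \<noteq> {}" if "i \<in> I" "j \<in> I" for i j
      using assms(4)[OF that] by blast
  qed
  then obtain c where "\<And>i. i \<in> I \<Longrightarrow> c \<in> (\<lambda>x. x$1) ` K i"
    by blast
  then have "\<forall>i\<in>I. \<exists>x\<in>K i. x$1 = c"
    by force
  then obtain q where q: "\<And>i. i \<in> I \<Longrightarrow> q i \<in> K i \<and> q i $ 1 = c"
    by metis
  let ?h = "\<lambda>i. q i $ 2"
  have "Min (?h ` I) \<in> ?h ` I" "Max (?h ` I) \<in> ?h ` I"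
    using assms(1,2) by (simp_all add: Min_in Max_in)
  then obtain i1 i2 where i12: "i1 \<in> I" "?h i1 = Min (?h ` I)" "i2 \<in> I" "?h i2 = Max (?h ` I)"
    by (auto simp: image_iff)
  have "q i \<in> closed_segment (q i1) (q i2)" if "i \<in> I" for i
    using q[OF that] q[OF i12(1)] q[OF i12(3)] i12 that assms(1)
    by (simp add: segment_vertical)
  then show ?thesis
    using q i12(1,3) by blast
qed

lemma common_point_if_sum_card_Diff_less:
  assumes "finite T" "(\<Sum>A\<in>T. card (P - A)) < card P"
  shows "\<exists>x\<in>P. \<forall>A\<in>T. x \<in> A"
proof -
  have "card (\<Union>A\<in>T. P - A) < card P"
    using card_UN_le[OF assms(1), of "\<lambda>A. P - A"] assms(2) by linarith
  then have "(\<Union>A\<in>T. P - A) \<noteq> P"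
    by auto
  then show ?thesis
    by blast
qed

definition heavy_subsets :: "'a set \<Rightarrow> real \<Rightarrow> 'a set set" where
  "heavy_subsets P t = {S. S \<subseteq> P \<and> t < real (card S)}"

lemma finite_heavy_subsets: "finite P \<Longrightarrow> finite (heavy_subsets P t)"
  unfolding heavy_subsets_def by (rule finite_subset[of _ "Pow P"]) auto

lemma card_Diff_heavy_subset_less:
  assumes "finite P" "S \<in> heavy_subsets P t"
  shows "real (card (P - S)) < real (card P) - t"
proof -
  have S: "S \<subseteq> P" "t < real (card S)"
    using assms(2) by (auto simp: heavy_subsets_def)
  have "card S \<le> card P"
    using assms(1) S(1) by (rule card_mono)
  moreover have "card (P - S) = card P - card S"
    using S(1) assms(1) by (metis card_Diff_subset finite_subset)
  ultimately show ?thesis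
    using S(2) by (simp add: of_nat_diff)
qed

lemma Diff_in_heavy_subsets:
  assumes "finite P" "real (card (P \<inter> H)) < real (card P) - t"
  shows "P - H \<in> heavy_subsets P t"
proof -
  have "card (P \<inter> H) \<le> card P"
    using assms(1) by (simp add: card_mono)
  moreover have "card (P - H) = card P - card (P \<inter> H)"
    using assms(1) by (simp add: card_Diff_subset_Int)
  ultimately show ?thesis
    using assms(2) by (auto simp: heavy_subsets_def of_nat_diff)
qed

lemma convex_closed_halfplane: "closed_halfplane H \<Longrightarrow> convex H"
  by (auto simp: closed_halfplane_def convex_halfspace_le)

lemma closed_halfplane_disjoint_convex_hull_Diff:
  assumes "closed_halfplane H"
  shows "H \<inter> convex hull (A - H) = {}"
proof -
  obtain a b where H: "H = {x. inner a x \<le> b}"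
    using assms by (auto simp: closed_halfplane_def)
  have "convex hull (A - H) \<subseteq> {x. b < inner a x}"
    by (rule hull_minimal) (auto simp: H convex_halfspace_gt)
  then show ?thesis
    by (auto simp: H)
qed

lemma heavy_hulls_meet:
  fixes P :: "(real^2) set"
  assumes "finite P"
    and S: "S \<in> heavy_subsets P (3 * real (card P) / 5)"
    and S': "S' \<in> heavy_subsets P (3 * real (card P) / 5)"
  shows "(\<Inter>X\<in>heavy_subsets P (4 * real (card P) / 5). convex hull X)
           \<inter> convex hull S \<inter> convex hull S' \<noteq> {}"
proof -
  let ?n = "real (card P)"
  define I where "I = insert S (insert S' (heavy_subsets P (4 * ?n / 5)))"
  have "\<Inter>((\<lambda>X. convex hull X) ` I) \<noteq> {}"
  proof (rule Helly_indexed)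
    show "finite I"
      using assms(1) by (simp add: I_def finite_heavy_subsets)
    show "convex (convex hull X)" for X :: "(real^2) set"
      by simp
    fix J assume J: "J \<subseteq> I" "J \<noteq> {}" "card J \<le> DIM(real^2) + 1"
    have "finite J"
      using J(1) \<open>finite I\<close> by (rule finite_subset)
    have "(\<Sum>X\<in>J. real (card (P - X)))
            < (\<Sum>X\<in>J. ?n / 5 + (if X \<in> {S, S'} then ?n / 5 else 0))"
    proof (rule sum_strict_mono[OF \<open>finite J\<close> J(2)])
      fix X assume "X \<in> J"
      show "real (card (P - X)) < ?n / 5 + (if X \<in> {S, S'} then ?n / 5 else 0)"
      proof (cases "X \<in> {S, S'}")
        case True
        then have "real (card (P - X)) < ?n - 3 * ?n / 5"
          using card_Diff_heavy_subset_less[OF assms(1) S]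
            card_Diff_heavy_subset_less[OF assms(1) S'] by auto
        then show ?thesis
          unfolding if_P[OF True] by linarith
      next
        case False
        then have "X \<in> heavy_subsets P (4 * ?n / 5)"
          using \<open>X \<in> J\<close> J(1) unfolding I_def by blast
        then have "real (card (P - X)) < ?n - 4 * ?n / 5"
          by (rule card_Diff_heavy_subset_less[OF assms(1)])
        then show ?thesis
          unfolding if_not_P[OF False] by linarith
      qed
    qed
    also have "\<dots> = real (card J) * (?n / 5) + real (card (J \<inter> {S, S'})) * (?n / 5)"
      using \<open>finite J\<close> by (simp add: sum.distrib sum.If_cases Int_def)
    also have "\<dots> \<le> 3 * (?n / 5) + 2 * (?n / 5)"
    proof -
      have "card (J \<inter> {S, S'}) \<le> card {S, S'}"
        by (rule card_mono) auto
      also have "\<dots> \<le> 2"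
        by (cases "S = S'") auto
      finally have "card (J \<inter> {S, S'}) \<le> 2" .
      then show ?thesis
        using J(3) by (intro add_mono mult_right_mono) auto
    qed
    finally have "(\<Sum>X\<in>J. real (card (P - X))) < ?n"
      by simp
    then have "(\<Sum>X\<in>J. card (P - X)) < card P"
      by (metis of_nat_less_iff of_nat_sum)
    then obtain x where "\<forall>X\<in>J. x \<in> X"
      using common_point_if_sum_card_Diff_less[OF \<open>finite J\<close>] by blast
    then show "\<Inter>((\<lambda>X. convex hull X) ` J) \<noteq> {}"
      by (auto intro: hull_inc)
  qed
  then show ?thesis
    by (auto simp: I_def)
qed

lemma segment_meeting_heavy_hulls:
  fixes P :: "(real^2) set"
  assumes "finite P" "P \<noteq> {}"
  defines "C \<equiv> \<Inter>X\<in>heavy_subsets P (4 * real (card P) / 5). convex hull X"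
  shows "\<exists>p1 p2. p1 \<in> C \<and> p2 \<in> C \<and>
           (\<forall>S\<in>heavy_subsets P (3 * real (card P) / 5).
              closed_segment p1 p2 \<inter> convex hull S \<noteq> {})"
proof -
  let ?I = "heavy_subsets P (3 * real (card P) / 5)"
  have "P \<in> ?I"
    using assms(1,2) by (simp add: heavy_subsets_def card_gt_0_iff)
  moreover have "convex (C \<inter> convex hull S)" for S
    unfolding C_def by (intro convex_Int convex_Inter) auto
  ultimately have "\<exists>p1 p2. p1 \<in> (\<Union>S\<in>?I. C \<inter> convex hull S) \<and>
      p2 \<in> (\<Union>S\<in>?I. C \<inter> convex hull S) \<and>
      (\<forall>S\<in>?I. closed_segment p1 p2 \<inter> (C \<inter> convex hull S) \<noteq> {})"
    using heavy_hulls_meet[OF assms(1)] finite_heavy_subsets[OF assms(1)]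
    by (intro segment_transversal_pairwise_intersecting)
      (auto simp: C_def Int_assoc Int_left_commute)
  then show ?thesis
    by blast
qed

theorem theorem3:
  fixes P :: "(real^2) set" and n :: nat
  assumes "finite P" and "card P = n" and "general_position P"
  shows "\<exists>p1 p2 :: real^2.
           (\<forall>H. closed_halfplane H \<and> (p1 \<in> H \<or> p2 \<in> H) \<longrightarrow>
                 real (card (P \<inter> H)) \<ge> real n / 5) \<and>
           (\<forall>H. closed_halfplane H \<and> p1 \<in> H \<and> p2 \<in> H \<longrightarrow>
                 real (card (P \<inter> H)) \<ge> 2 * real n / 5)"
proof (cases "P = {}")
  case True
  then show ?thesis
    using assms(2) by simp
next
  case False
  obtain p1 p2 where
    p12: "\<forall>X\<in>heavy_subsets P (4 * real n / 5). p1 \<in> convex hull X \<and> p2 \<in> convex hull X" and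
    segment: "\<forall>S\<in>heavy_subsets P (3 * real n / 5). closed_segment p1 p2 \<inter> convex hull S \<noteq> {}"
    using segment_meeting_heavy_hulls[OF assms(1) False] assms(2) by blast
  show ?thesis
  proof (intro exI conjI allI impI; rule ccontr)
    fix H
    assume H: "closed_halfplane H \<and> (p1 \<in> H \<or> p2 \<in> H)" "\<not> real n / 5 \<le> real (card (P \<inter> H))"
    then have "P - H \<in> heavy_subsets P (4 * real n / 5)"
      using assms(1,2) by (intro Diff_in_heavy_subsets) auto
    then show False
      using p12 H closed_halfplane_disjoint_convex_hull_Diff[of H P] by blast
  next
    fix H
    assume H: "closed_halfplane H \<and> p1 \<in> H \<and> p2 \<in> H" "\<not> 2 * real n / 5 \<le> real (card (P \<inter> H))"
    then have "P - H \<in> heavy_subsets P (3 * real n / 5)"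
      using assms(1,2) by (intro Diff_in_heavy_subsets) auto
    moreover have "closed_segment p1 p2 \<subseteq> H"
      using H(1) convex_closed_halfplane by (simp add: closed_segment_subset)
    ultimately show False
      using segment closed_halfplane_disjoint_convex_hull_Diff[of H P] H(1) by blast
  qed
qed

end
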